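(* Let $\mu$ be a probability measure on $[0,1]$. Then $\tilde\rho(\mu)(\bar\mu)=\max_{p\in[0,1]}\tilde\rho(\mu)(p)$, and for every $p\in[0,1]$, \[\tilde\rho(\mu)(\bar\mu)-\tilde\rho(\mu)(p)\le 2|\bar\mu-p|.\] If moreover $\mu$ has a density bounded by some constant $M>0$, then $\rho(\mu)=\tilde\rho(\mu)$ and \[0\le \rho(\mu)(\bar\mu)-\rho(\mu)(p)\le M|\bar\mu-p|^2\qquad\text{for all }p\in[0,1].\]
   Context: For a probability measure $\mu$ on $[0,1]$, let $\bar\mu:=\int_{[0,1]}x\,\mathrm d\mu(x)$, and write $\mu[a,b]$, $\mu[a,b)$, $\mu\{p\}$ for the $\mu$-measure of the corresponding sets. Define functions $\tilde\rho(\mu),\rho(\mu):[0,1]\to\mathbb R$ by \[\tilde\rho(\mu)(p):=\int_0^p\big(\mu[0,\lambda]+\mu[0,\lambda)\big)\,\mathrm d\lambda+\big(\mu[0,p]+\mu[0,p)\big)(\bar\mu-p),\] \[\rho(\mu)(p):=\tilde\rho(\mu)(p)+\mu\{p\}\Big(\int_0^p\mu[0,\lambda]\,\mathrm d\lambda+\int_p^1\mu[\lambda,1]\,\mathrm d\lambda\Big).\] "$\mu$ has a density bounded by $M$" means $\mu$ is absolutely continuous with respect to Lebesgue measure with a density $f$ satisfying $f\le M$. *)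

theory Defs
  imports "HOL-Probability.Probability"
begin

definition prob_on_unit :: "real measure \<Rightarrow> bool" where
  "prob_on_unit \<mu> \<longleftrightarrow> prob_space \<mu> \<and> sets \<mu> = sets (restrict_space borel {0..1::real})"

definition mean :: "real measure \<Rightarrow> real" where
  "mean \<mu> = integral\<^sup>L \<mu> (\<lambda>x. x)"

definition cdf2 :: "real measure \<Rightarrow> real \<Rightarrow> real" where
  "cdf2 \<mu> l = measure \<mu> {0..l} + measure \<mu> {0..<l}"

definition rho_tilde :: "real measure \<Rightarrow> real \<Rightarrow> real" where
  "rho_tilde \<mu> p = integral {0..p} (\<lambda>l. cdf2 \<mu> l) + cdf2 \<mu> p * (mean \<mu> - p)"

definition rho :: "real measure \<Rightarrow> real \<Rightarrow> real" where
  "rho \<mu> p = rho_tilde \<mu> p + measure \<mu> {p} *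
     (integral {0..p} (\<lambda>l. measure \<mu> {0..l}) + integral {p..1} (\<lambda>l. measure \<mu> {l..1}))"

definition density_bounded_by :: "real measure \<Rightarrow> real \<Rightarrow> bool" where
  "density_bounded_by \<mu> M \<longleftrightarrow> (\<exists>f. f \<in> borel_measurable borel \<and> (\<forall>x. 0 \<le> f x \<and> f x \<le> M) \<and>
      (\<forall>A\<in>sets \<mu>. emeasure \<mu> A = (\<integral>\<^sup>+ x\<in>A. ennreal (f x) \<partial>lborel)))"

end

theory Submission
  imports Defs
begin

text \<open>Write \<open>F = cdf2 \<mu>\<close> and \<open>m = mean \<mu>\<close>. Then \<open>rho_tilde \<mu> p = \<integral>\<^sub>0\<^sup>p F + F p (m - p)\<close>, so
  \<open>rho_tilde \<mu> m - rho_tilde \<mu> p\<close> is \<open>\<integral>\<^sub>p\<^sup>m (F - F p)\<close> for \<open>p \<le> m\<close> and \<open>\<integral>\<^sub>m\<^sup>p (F p - F)\<close> for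
  \<open>m \<le> p\<close>. Since \<open>F\<close> is monotone with values in \<open>[0,2]\<close>, both integrands lie in \<open>[0,2]\<close>.
  A density bounded by \<open>M\<close> makes \<open>F\<close> Lipschitz with constant \<open>2M\<close>, so the integrands are
  bounded by \<open>2M\<close> times the distance to \<open>p\<close>, giving the quadratic bound; it also rules out
  atoms, so that \<open>rho = rho_tilde\<close>.\<close>

lemma integral_mono_on_bounds:
  fixes F :: "real \<Rightarrow> real"
  assumes "mono_on {a..b} F" "a \<le> b"
  shows "F a * (b - a) \<le> integral {a..b} F" "integral {a..b} F \<le> F b * (b - a)"
proof -
  have F: "F integrable_on {a..b}" using assms(1) by (rule integrable_on_mono_on)
  have "integral {a..b} (\<lambda>x. F a) \<le> integral {a..b} F"
    by (rule integral_le) (use F assms(2) in \<open>auto intro!: mono_onD[OF assms(1)]\<close>)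
  then show "F a * (b - a) \<le> integral {a..b} F" using assms(2) by (simp add: mult.commute)
  have "integral {a..b} F \<le> integral {a..b} (\<lambda>x. F b)"
    by (rule integral_le) (use F assms(2) in \<open>auto intro!: mono_onD[OF assms(1)]\<close>)
  then show "integral {a..b} F \<le> F b * (b - a)" using assms(2) by (simp add: mult.commute)
qed

lemma has_integral_affine:
  fixes c L :: real
  assumes "a \<le> b"
  shows "((\<lambda>x. c + L * (x - a)) has_integral c * (b - a) + L * (b - a)\<^sup>2 / 2) {a..b}"
proof -
  have "((\<lambda>x. (c - L * a) + L * x) has_integral (c - L * a) * (b - a) + L * ((b\<^sup>2 - a\<^sup>2) / 2)) {a..b}"
    using has_integral_add[OF has_integral_const_real[of "c - L * a" a b]
        has_integral_mult_right[OF ident_has_integral[OF assms], of L]] assms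
    by (simp add: mult.commute)
  moreover have "(\<lambda>x. (c - L * a) + L * x) = (\<lambda>x. c + L * (x - a))"
    by (auto simp: algebra_simps)
  moreover have "(c - L * a) * (b - a) + L * ((b\<^sup>2 - a\<^sup>2) / 2) = c * (b - a) + L * (b - a)\<^sup>2 / 2"
    by (simp add: power2_eq_square field_simps)
  ultimately show ?thesis by simp
qed

lemma integral_le_affine_bound:
  fixes f :: "real \<Rightarrow> real"
  assumes "f integrable_on {a..b}" "a \<le> b" "\<And>x. x \<in> {a..b} \<Longrightarrow> f x \<le> c + L * (x - a)"
  shows "integral {a..b} f \<le> c * (b - a) + L * (b - a)\<^sup>2 / 2"
  using has_integral_le[OF integrable_integral[OF assms(1)] has_integral_affine[OF assms(2)]] assms(3)
  by blast

lemma integral_ge_affine_bound: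
  fixes f :: "real \<Rightarrow> real"
  assumes "f integrable_on {a..b}" "a \<le> b" "\<And>x. x \<in> {a..b} \<Longrightarrow> c - L * (b - x) \<le> f x"
  shows "c * (b - a) - L * (b - a)\<^sup>2 / 2 \<le> integral {a..b} f"
proof -
  have "\<And>x. x \<in> {a..b} \<Longrightarrow> (c - L * (b - a)) + L * (x - a) \<le> f x"
    using assms(3) by (simp add: algebra_simps)
  from has_integral_le[OF has_integral_affine[OF assms(2)] integrable_integral[OF assms(1)] this]
  moreover have "(c - L * (b - a)) * (b - a) + L * (b - a)\<^sup>2 / 2 = c * (b - a) - L * (b - a)\<^sup>2 / 2"
    by (simp add: power2_eq_square field_simps)
  ultimately show ?thesis by linarith
qed

lemma prob_on_unit_prob_space: "prob_on_unit \<mu> \<Longrightarrow> prob_space \<mu>"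
  unfolding prob_on_unit_def by simp

lemma prob_on_unit_space:
  assumes "prob_on_unit \<mu>"
  shows "space \<mu> = {0..1}"
proof -
  have "sets \<mu> = sets (restrict_space borel {0..1::real})"
    using assms unfolding prob_on_unit_def by simp
  from sets_eq_imp_space_eq[OF this] show ?thesis by simp
qed

lemma prob_on_unit_sets:
  assumes "prob_on_unit \<mu>" "A \<subseteq> {0..1}" "A \<in> sets borel"
  shows "A \<in> sets \<mu>"
  using assms unfolding prob_on_unit_def by (simp add: sets_restrict_space_iff)

lemma mean_in_unit:
  assumes "prob_on_unit \<mu>"
  shows "mean \<mu> \<in> {0..1}"
proof -
  interpret prob_space \<mu> using assms by (rule prob_on_unit_prob_space)
  have ae: "AE x in \<mu>. 0 \<le> x \<and> x \<le> 1"
    using prob_on_unit_space[OF assms] by (intro AE_I2) auto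
  have "(\<lambda>x. x) \<in> borel_measurable \<mu>"
    using assms measurable_restrict_space1[OF measurable_ident_sets[of borel borel]]
    unfolding prob_on_unit_def by (metis measurable_cong_sets)
  then have int: "integrable \<mu> (\<lambda>x. x)"
    using ae by (intro integrable_const_bound[where B=1]) auto
  have "0 \<le> mean \<mu>" unfolding mean_def by (rule integral_nonneg_AE) (use ae in auto)
  moreover have "mean \<mu> \<le> integral\<^sup>L \<mu> (\<lambda>x. 1)" unfolding mean_def
    by (rule integral_mono_AE) (use ae int in auto)
  ultimately show ?thesis by (simp add: prob_space)
qed

lemma cdf2_nonneg_le_2:
  assumes "prob_on_unit \<mu>"
  shows "0 \<le> cdf2 \<mu> x" "cdf2 \<mu> x \<le> 2"
proof -
  interpret prob_space \<mu> using assms by (rule prob_on_unit_prob_space)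
  show "0 \<le> cdf2 \<mu> x" unfolding cdf2_def by simp
  show "cdf2 \<mu> x \<le> 2" unfolding cdf2_def using prob_le_1[of "{0..x}"] prob_le_1[of "{0..<x}"] by linarith
qed

lemma cdf2_mono_on:
  assumes "prob_on_unit \<mu>" "0 \<le> a" "b \<le> 1"
  shows "mono_on {a..b} (cdf2 \<mu>)"
proof (rule mono_onI)
  interpret prob_space \<mu> using assms(1) by (rule prob_on_unit_prob_space)
  fix x y :: real assume "x \<in> {a..b}" "y \<in> {a..b}" "x \<le> y"
  then have "measure \<mu> {0..x} \<le> measure \<mu> {0..y}" "measure \<mu> {0..<x} \<le> measure \<mu> {0..<y}"
    using assms by (auto intro!: finite_measure_mono prob_on_unit_sets[OF assms(1)])
  then show "cdf2 \<mu> x \<le> cdf2 \<mu> y" unfolding cdf2_def by simp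
qed

lemma cdf2_integrable_on:
  assumes "prob_on_unit \<mu>" "0 \<le> a" "b \<le> 1"
  shows "cdf2 \<mu> integrable_on {a..b}"
  using cdf2_mono_on[OF assms] by (rule integrable_on_mono_on)

lemma measure_interval_le_density_bound:
  assumes "prob_on_unit \<mu>" "density_bounded_by \<mu> M" "0 \<le> a" "a \<le> b" "b \<le> 1"
  shows "measure \<mu> {a..b} \<le> M * (b - a)"
proof -
  interpret prob_space \<mu> using assms(1) by (rule prob_on_unit_prob_space)
  obtain f where f: "\<forall>x. 0 \<le> f x \<and> f x \<le> M"
    "\<forall>A\<in>sets \<mu>. emeasure \<mu> A = (\<integral>\<^sup>+ x\<in>A. ennreal (f x) \<partial>lborel)"
    using assms(2) unfolding density_bounded_by_def by blast
  have M: "0 \<le> M" using f(1) by (meson order_trans)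
  have "emeasure \<mu> {a..b} = (\<integral>\<^sup>+ x. ennreal (f x) * indicator {a..b} x \<partial>lborel)"
    using f(2) prob_on_unit_sets[OF assms(1)] assms(3-5) by auto
  also have "\<dots> \<le> (\<integral>\<^sup>+ x. ennreal M * indicator {a..b} x \<partial>lborel)"
    by (intro nn_integral_mono) (use f(1) in \<open>auto simp: indicator_def intro: ennreal_leI\<close>)
  also have "\<dots> = ennreal (M * (b - a))"
    using M assms(4) by (simp add: nn_integral_cmult_indicator ennreal_mult)
  finally show ?thesis
    using M assms(4) by (simp add: emeasure_eq_measure)
qed

lemma cdf2_lipschitz:
  assumes "prob_on_unit \<mu>" "density_bounded_by \<mu> M" "0 \<le> a" "a \<le> b" "b \<le> 1"
  shows "cdf2 \<mu> b - cdf2 \<mu> a \<le> 2 * M * (b - a)"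
proof -
  interpret prob_space \<mu> using assms(1) by (rule prob_on_unit_prob_space)
  note sets = prob_on_unit_sets[OF assms(1)]
  have "{0..b} = {0..<a} \<union> {a..b}" using assms by auto
  then have "measure \<mu> {0..b} \<le> measure \<mu> {0..<a} + measure \<mu> {a..b}"
    using assms by (auto intro!: measure_subadditive sets)
  moreover have "measure \<mu> {0..<a} \<le> measure \<mu> {0..a}" "measure \<mu> {0..<b} \<le> measure \<mu> {0..b}"
    using assms by (auto intro!: finite_measure_mono sets)
  ultimately show ?thesis
    using measure_interval_le_density_bound[OF assms] unfolding cdf2_def by linarith
qed

lemma rho_eq_rho_tilde:
  assumes "prob_on_unit \<mu>" "density_bounded_by \<mu> M" "p \<in> {0..1}"
  shows "rho \<mu> p = rho_tilde \<mu> p"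
proof -
  have "measure \<mu> {p} \<le> 0"
    using measure_interval_le_density_bound[OF assms(1,2), of p p] assms(3) by simp
  then have "measure \<mu> {p} = 0" by (simp add: antisym)
  then show ?thesis unfolding rho_def by simp
qed

lemma integral_cdf2_combine:
  assumes "prob_on_unit \<mu>" "0 \<le> a" "a \<le> b" "b \<le> 1"
  shows "integral {0..b} (cdf2 \<mu>) = integral {0..a} (cdf2 \<mu>) + integral {a..b} (cdf2 \<mu>)"
  using Henstock_Kurzweil_Integration.integral_combine[OF assms(2,3)
      cdf2_integrable_on[OF assms(1) order_refl assms(4)], symmetric] .

lemma rho_tilde_mean_diff_below:
  assumes "prob_on_unit \<mu>" "0 \<le> p" "p \<le> mean \<mu>"
  shows "rho_tilde \<mu> (mean \<mu>) - rho_tilde \<mu> p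
    = integral {p..mean \<mu>} (cdf2 \<mu>) - cdf2 \<mu> p * (mean \<mu> - p)"
  using integral_cdf2_combine[OF assms] mean_in_unit[OF assms(1)]
  unfolding rho_tilde_def by (simp add: algebra_simps)

lemma rho_tilde_mean_diff_above:
  assumes "prob_on_unit \<mu>" "mean \<mu> \<le> p" "p \<le> 1"
  shows "rho_tilde \<mu> (mean \<mu>) - rho_tilde \<mu> p
    = cdf2 \<mu> p * (p - mean \<mu>) - integral {mean \<mu>..p} (cdf2 \<mu>)"
  using integral_cdf2_combine[OF assms(1) _ assms(2,3)] mean_in_unit[OF assms(1)]
  unfolding rho_tilde_def by (simp add: algebra_simps)

lemma rho_tilde_mean_gap:
  assumes "prob_on_unit \<mu>" "p \<in> {0..1}"
  shows "rho_tilde \<mu> p \<le> rho_tilde \<mu> (mean \<mu>)"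
    "rho_tilde \<mu> (mean \<mu>) - rho_tilde \<mu> p \<le> 2 * \<bar>mean \<mu> - p\<bar>"
proof -
  define m where "m = mean \<mu>"
  have m: "0 \<le> m" "m \<le> 1" using mean_in_unit[OF assms(1)] unfolding m_def by auto
  note F = cdf2_nonneg_le_2[OF assms(1)]
  have "0 \<le> rho_tilde \<mu> m - rho_tilde \<mu> p \<and> rho_tilde \<mu> m - rho_tilde \<mu> p \<le> 2 * \<bar>m - p\<bar>"
  proof (cases "p \<le> m")
    case True
    have "(cdf2 \<mu> m - cdf2 \<mu> p) * (m - p) \<le> 2 * (m - p)"
      using True F[of m] F[of p] by (intro mult_right_mono) auto
    then show ?thesis
      using True rho_tilde_mean_diff_below[OF assms(1), of p] assms(2)
        integral_mono_on_bounds[OF cdf2_mono_on[OF assms(1), of p m] True] m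
      unfolding m_def by (auto simp: algebra_simps)
  next
    case False
    have "(cdf2 \<mu> p - cdf2 \<mu> m) * (p - m) \<le> 2 * (p - m)"
      using False F[of m] F[of p] by (intro mult_right_mono) auto
    then show ?thesis
      using False rho_tilde_mean_diff_above[OF assms(1), of p] assms(2)
        integral_mono_on_bounds[OF cdf2_mono_on[OF assms(1), of m p]] m
      unfolding m_def by (auto simp: algebra_simps)
  qed
  then show "rho_tilde \<mu> p \<le> rho_tilde \<mu> (mean \<mu>)"
    "rho_tilde \<mu> (mean \<mu>) - rho_tilde \<mu> p \<le> 2 * \<bar>mean \<mu> - p\<bar>"
    unfolding m_def by auto
qed

lemma rho_tilde_mean_gap_quadratic:
  assumes "prob_on_unit \<mu>" "density_bounded_by \<mu> M" "p \<in> {0..1}"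
  shows "rho_tilde \<mu> (mean \<mu>) - rho_tilde \<mu> p \<le> M * \<bar>mean \<mu> - p\<bar>\<^sup>2"
proof -
  define m where "m = mean \<mu>"
  have m: "0 \<le> m" "m \<le> 1" using mean_in_unit[OF assms(1)] unfolding m_def by auto
  note int = cdf2_integrable_on[OF assms(1)]
  note lip = cdf2_lipschitz[OF assms(1,2)]
  show ?thesis
  proof (cases "p \<le> m")
    case True
    have "integral {p..m} (cdf2 \<mu>) \<le> cdf2 \<mu> p * (m - p) + 2 * M * (m - p)\<^sup>2 / 2"
    proof (rule integral_le_affine_bound)
      show "cdf2 \<mu> integrable_on {p..m}" using int assms(3) m by simp
      fix x assume "x \<in> {p..m}"
      then show "cdf2 \<mu> x \<le> cdf2 \<mu> p + 2 * M * (x - p)"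
        using lip[of p x] assms(3) m by auto
    qed (fact True)
    then show ?thesis
      using rho_tilde_mean_diff_below[OF assms(1), of p] True assms(3)
      unfolding m_def by simp
  next
    case False
    have "cdf2 \<mu> p * (p - m) - 2 * M * (p - m)\<^sup>2 / 2 \<le> integral {m..p} (cdf2 \<mu>)"
    proof (rule integral_ge_affine_bound)
      show "cdf2 \<mu> integrable_on {m..p}" using int assms(3) m by simp
      show "m \<le> p" using False by simp
      fix x assume "x \<in> {m..p}"
      then show "cdf2 \<mu> p - 2 * M * (p - x) \<le> cdf2 \<mu> x"
        using lip[of x p] assms(3) m by auto
    qed
    then show ?thesis
      using rho_tilde_mean_diff_above[OF assms(1), of p] False assms(3)
      unfolding m_def by (simp add: power2_commute)
  qed
qed

theorem lemma2p1:
  fixes \<mu> :: "real measure"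
  assumes "prob_on_unit \<mu>"
  shows "mean \<mu> \<in> {0..1} \<and> (\<forall>p\<in>{0..1}. rho_tilde \<mu> p \<le> rho_tilde \<mu> (mean \<mu>))
    \<and> (\<forall>p\<in>{0..1}. rho_tilde \<mu> (mean \<mu>) - rho_tilde \<mu> p \<le> 2 * \<bar>mean \<mu> - p\<bar>)
    \<and> (\<forall>M>0. density_bounded_by \<mu> M \<longrightarrow>
           (\<forall>p\<in>{0..1}. rho \<mu> p = rho_tilde \<mu> p) \<and>
           (\<forall>p\<in>{0..1}. 0 \<le> rho \<mu> (mean \<mu>) - rho \<mu> p \<and>
                         rho \<mu> (mean \<mu>) - rho \<mu> p \<le> M * \<bar>mean \<mu> - p\<bar>^2))"
proof (intro conjI ballI allI impI)
  show m: "mean \<mu> \<in> {0..1}" using assms by (rule mean_in_unit)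
  fix M p :: real assume M: "density_bounded_by \<mu> M" and p: "p \<in> {0..1}"
  note rho_eq = rho_eq_rho_tilde[OF assms M]
  show "rho \<mu> p = rho_tilde \<mu> p" using rho_eq[OF p] .
  show "0 \<le> rho \<mu> (mean \<mu>) - rho \<mu> p"
    using rho_tilde_mean_gap(1)[OF assms p] rho_eq[OF p] rho_eq[OF m] by simp
  show "rho \<mu> (mean \<mu>) - rho \<mu> p \<le> M * \<bar>mean \<mu> - p\<bar>^2"
    using rho_tilde_mean_gap_quadratic[OF assms M p] rho_eq[OF p] rho_eq[OF m] by simp
qed (use rho_tilde_mean_gap[OF assms] in auto)

end
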